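(* Let $p\in(0,1]$, let $(\mathcal M,d,0)$ be a finite pointed $p$-metric space and let $M_1,M_2\subset\mathcal M$ satisfy $M_1\cup M_2=\mathcal M$, $0\in M_2$, $M_1\cap M_2=\{x_0\}$ for some $x_0\in\mathcal M\setminus\{0\}$, and $|M_1|\ge2$. Let $\mathcal M_1=(M_1,d,x_0)$ and $\mathcal M_2=(M_2,d,0)$. Let $T\in\mathcal T(\mathcal M)$, $T_1\in\mathcal T(\mathcal M_1)$ (rooted at $x_0$), $T_2\in\mathcal T(\mathcal M_2)$ (rooted at $0$) be such that $E^T=E^{T_1}\cup E^{T_2}$. Let $a\in\mathbb R^{\mathcal M\setminus\{0\}}$, $a_1:=a|_{M_1\setminus\{x_0\}}$, and $a_2\in\mathbb R^{M_2\setminus\{0\}}$ defined by $a_2(y)=a(y)$ for $y\in M_2\setminus\{0,x_0\}$ and $a_2(x_0)=\sum_{w\in M_1}a(w)$. Then \[T(a)^p=T_1(a_1)^p+T_2(a_2)^p.\]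
   Context: A $p$-metric space is a set with $d$ such that $d^p$ is a metric; pointed means a distinguished base point. For a finite pointed $p$-metric space $(\mathcal K,d,r)$, $\mathcal T(\mathcal K)$ is the set of trees with vertex set $\mathcal K$ rooted at $r$; $E^T$ denotes the (unordered) edge set of $T$. For $x\ne r$, $\mathrm{pred}_T(x)$ is the neighbour of $x$ on the path to $r$, $e_x^T=\{\mathrm{pred}_T(x),x\}$, and $V_x^T$ is the vertex set of the subtree rooted at $x$. For $b\in\mathbb R^{\mathcal K\setminus\{r\}}$, $T(b)=\big(\sum_{x\in\mathcal K\setminus\{r\}}|(\sum_{y\in V_x^T}b_y)\,d(e_x^T)|^p\big)^{1/p}$. *)

theory Defs
  imports Complex_Main
begin

definition p_metric :: "'a set \<Rightarrow> ('a \<Rightarrow> 'a \<Rightarrow> real) \<Rightarrow> real \<Rightarrow> bool" where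
  "p_metric M d p \<longleftrightarrow>
     (\<forall>x\<in>M. \<forall>y\<in>M. d x y \<ge> 0 \<and> (d x y = 0 \<longleftrightarrow> x = y) \<and> d x y = d y x) \<and>
     (\<forall>x\<in>M. \<forall>y\<in>M. \<forall>z\<in>M. d x z powr p \<le> d x y powr p + d y z powr p)"

definition reach_in :: "'a set set \<Rightarrow> 'a set \<Rightarrow> 'a \<Rightarrow> 'a \<Rightarrow> bool" where
  "reach_in E A u v \<longleftrightarrow> (u, v) \<in> {(a, b). a \<in> A \<and> b \<in> A \<and> {a, b} \<in> E}\<^sup>*"

definition is_tree :: "'a set \<Rightarrow> 'a set set \<Rightarrow> bool" where
  "is_tree K E \<longleftrightarrow> finite K \<and> K \<noteq> {} \<and>
     E \<subseteq> {{u, v} | u v. u \<in> K \<and> v \<in> K \<and> u \<noteq> v} \<and>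
     card E + 1 = card K \<and>
     (\<forall>u\<in>K. \<forall>v\<in>K. reach_in E K u v)"

text \<open>The set \<T>(K) of trees with vertex set K (rooted at the base point,
  which is passed separately to the functions below).\<close>
definition trees :: "'a set \<Rightarrow> 'a set set set" where
  "trees K = {E. is_tree K E}"

text \<open>pred_T(x): the neighbour of x on the path from x to the root r.\<close>
definition tpred :: "'a set \<Rightarrow> 'a set set \<Rightarrow> 'a \<Rightarrow> 'a \<Rightarrow> 'a" where
  "tpred K E r x = (THE y. {y, x} \<in> E \<and> reach_in E (K - {x}) r y)"

definition subtree :: "'a set \<Rightarrow> 'a set set \<Rightarrow> 'a \<Rightarrow> 'a \<Rightarrow> 'a set" where
  "subtree K E r x = {y \<in> K. reach_in (E - {{tpred K E r x, x}}) K x y}"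

definition tree_norm :: "real \<Rightarrow> ('a \<Rightarrow> 'a \<Rightarrow> real) \<Rightarrow> 'a set \<Rightarrow> 'a \<Rightarrow> 'a set set \<Rightarrow> ('a \<Rightarrow> real) \<Rightarrow> real" where
  "tree_norm p d K r E b =
     (\<Sum>x\<in>K - {r}. \<bar>(\<Sum>y\<in>subtree K E r x. b y) * d (tpred K E r x) x\<bar> powr p) powr (1 / p)"

end

(*
  For x in M1 - {x0} the path from x to the root z passes through x0, so x has the same
  predecessor and the same subtree in T as in T1 rooted at x0.  For x in M2 - {z} the
  predecessor is the one in T2, and the subtree of x in T is its subtree in T2, enlarged by
  all of M1 exactly when it contains x0; hence its a-mass is the T2-subtree mass of a with
  a(x0) replaced by the total mass of a on M1.  Splitting the sum defining T(a)^p over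
  M - {z} = (M1 - {x0}) \<union> (M2 - {z}) gives the identity.
*)
theory Submission
  imports Defs
begin

lemma reach_in_refl: "reach_in E A u u"
  by (simp add: reach_in_def)

lemma reach_in_step:
  "reach_in E A u v \<Longrightarrow> v \<in> A \<Longrightarrow> w \<in> A \<Longrightarrow> {v, w} \<in> E \<Longrightarrow> reach_in E A u w"
  unfolding reach_in_def by (erule rtrancl_into_rtrancl) auto

lemma reach_in_trans: "reach_in E A u v \<Longrightarrow> reach_in E A v w \<Longrightarrow> reach_in E A u w"
  unfolding reach_in_def by (rule rtrancl_trans)

lemma reach_in_sym: "reach_in E A u v \<Longrightarrow> reach_in E A v u"
proof -
  have "sym {(a, b). a \<in> A \<and> b \<in> A \<and> {a, b} \<in> E}"
    by (auto simp: sym_def insert_commute)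
  then show "reach_in E A u v \<Longrightarrow> reach_in E A v u"
    unfolding reach_in_def by (auto dest: sym_rtrancl symD)
qed

lemma reach_in_mono: "reach_in E A u v \<Longrightarrow> E \<subseteq> E' \<Longrightarrow> A \<subseteq> A' \<Longrightarrow> reach_in E' A' u v"
  unfolding reach_in_def by (erule rev_subsetD[OF _ rtrancl_mono]) auto

lemma reach_in_endpoints: "reach_in E A u v \<Longrightarrow> u \<noteq> v \<Longrightarrow> u \<in> A \<and> v \<in> A"
  unfolding reach_in_def by (auto elim: converse_rtranclE rtranclE)

lemma reach_in_avoid_edge:
  "reach_in E (K - {x}) u v \<Longrightarrow> x \<in> e \<Longrightarrow> K - {x} \<subseteq> K' \<Longrightarrow> reach_in (E - {e}) K' u v"
  unfolding reach_in_def by (erule rev_subsetD[OF _ rtrancl_mono]) auto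

lemma reach_in_induct [consumes 1, case_names base step]:
  assumes "reach_in E A u v" and "P u"
    and "\<And>w w'. reach_in E A u w \<Longrightarrow> P w \<Longrightarrow> w \<in> A \<Longrightarrow> w' \<in> A \<Longrightarrow> {w, w'} \<in> E \<Longrightarrow> P w'"
  shows "P v"
  using assms(1) unfolding reach_in_def
proof (induction rule: rtrancl_induct)
  case base
  show ?case using assms(2) .
next
  case (step w w')
  then show ?case using assms(3) unfolding reach_in_def by auto
qed

lemma reach_in_closed:
  assumes "reach_in E A u v" and "u \<in> S"
    and "\<And>w w'. w \<in> S \<Longrightarrow> w' \<in> A \<Longrightarrow> {w, w'} \<in> E \<Longrightarrow> w' \<in> S"
  shows "v \<in> S"
  using assms(1,2) by (induction rule: reach_in_induct) (use assms(3) in blast)+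

lemma connected_card_le:
  assumes "finite K" and "r \<in> K" and "finite E" and conn: "\<forall>v\<in>K. reach_in E K r v"
  shows "card K \<le> card E + 1"
proof -
  define R where "R = {(a, b). a \<in> K \<and> b \<in> K \<and> {a, b} \<in> E}"
  define h where "h v = (LEAST n. (r, v) \<in> R ^^ n)" for v
  \<comment> \<open>Each \<open>v \<noteq> r\<close> has a neighbour closer to \<open>r\<close>; the edges to these parents are distinct.\<close>
  have "\<exists>w. {w, v} \<in> E \<and> h w < h v" if v: "v \<in> K - {r}" for v
  proof -
    have "\<exists>n. (r, v) \<in> R ^^ n"
      using conn v by (auto simp: reach_in_def R_def rtrancl_power)
    then have rv: "(r, v) \<in> R ^^ h v"
      unfolding h_def by (rule LeastI_ex)
    then obtain m where m: "h v = Suc m"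
      using v by (cases "h v") auto
    then obtain w where rw: "(r, w) \<in> R ^^ m" and wv: "(w, v) \<in> R"
      using rv by auto
    from rw have "h w \<le> m"
      unfolding h_def by (rule Least_le)
    with m wv show ?thesis
      unfolding R_def by auto
  qed
  then obtain par where par: "\<And>v. v \<in> K - {r} \<Longrightarrow> {par v, v} \<in> E \<and> h (par v) < h v"
    by metis
  have "inj_on (\<lambda>v. {par v, v}) (K - {r})"
  proof (rule inj_onI)
    fix v v' assume v: "v \<in> K - {r}" "v' \<in> K - {r}" and eq: "{par v, v} = {par v', v'}"
    show "v = v'"
    proof (rule ccontr)
      assume "v \<noteq> v'"
      with eq have "par v = v'" "par v' = v"
        by (auto simp: doubleton_eq_iff)
      then show False
        using par[OF v(1)] par[OF v(2)] by simp
    qed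
  qed
  then have "card (K - {r}) \<le> card E"
    using par \<open>finite E\<close> by (intro card_inj_on_le) auto
  then show ?thesis
    using assms(1,2) by (simp add: card_Diff_singleton)
qed

lemma is_tree_finite_edges: "is_tree K E \<Longrightarrow> finite E"
  unfolding is_tree_def by (auto intro: finite_subset[of E "Pow K"])

lemma is_tree_edge: "is_tree K E \<Longrightarrow> {a, b} \<in> E \<Longrightarrow> a \<in> K \<and> b \<in> K \<and> a \<noteq> b"
  unfolding is_tree_def by (auto simp: doubleton_eq_iff)

lemma is_tree_connected: "is_tree K E \<Longrightarrow> u \<in> K \<Longrightarrow> v \<in> K \<Longrightarrow> reach_in E K u v"
  unfolding is_tree_def by blast

text \<open>Otherwise the remaining edges would still connect \<open>K\<close>, violating \<open>connected_card_le\<close>.\<close>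
lemma is_tree_edge_is_bridge:
  assumes tree: "is_tree K E" and uv: "{u, v} \<in> E"
  shows "\<not> reach_in (E - {{u, v}}) K u v"
proof
  assume detour: "reach_in (E - {{u, v}}) K u v"
  have bypass: "reach_in (E - {{u, v}}) K a b" if "reach_in E K a b" for a b
    using that
  proof (induction rule: reach_in_induct)
    case base
    show ?case by (rule reach_in_refl)
  next
    case (step w w')
    show ?case
    proof (cases "{w, w'} = {u, v}")
      case True
      then have "w = u \<and> w' = v \<or> w = v \<and> w' = u"
        by (simp add: doubleton_eq_iff)
      then have "reach_in (E - {{u, v}}) K w w'"
        using detour reach_in_sym[OF detour] by auto
      then show ?thesis
        by (rule reach_in_trans[OF step.IH])
    next
      case False
      then show ?thesis
        using reach_in_step[OF step.IH step.hyps(2,3)] step.hyps(4) by blast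
    qed
  qed
  have "u \<in> K"
    using is_tree_edge[OF tree uv] by blast
  then have "\<forall>w\<in>K. reach_in (E - {{u, v}}) K u w"
    using bypass is_tree_connected[OF tree] by blast
  then have "card K \<le> card (E - {{u, v}}) + 1"
    using \<open>u \<in> K\<close> tree is_tree_finite_edges[OF tree]
    by (intro connected_card_le) (auto simp: is_tree_def)
  moreover have "card (E - {{u, v}}) + 1 = card E"
  proof -
    have "card E > 0"
      using uv is_tree_finite_edges[OF tree] card_gt_0_iff by blast
    then show ?thesis
      using card_Diff_singleton[OF uv] by simp
  qed
  ultimately show False
    using tree by (simp add: is_tree_def)
qed

lemma tpred_ex1:
  assumes tree: "is_tree K E" and r: "r \<in> K" and x: "x \<in> K" "x \<noteq> r"
  shows "\<exists>!y. {y, x} \<in> E \<and> reach_in E (K - {x}) r y"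
proof (rule ex_ex1I)
  have "(\<exists>y. {y, x} \<in> E \<and> reach_in E (K - {x}) r y) \<or> reach_in E (K - {x}) r w"
    if "reach_in E K r w" for w
    using that
  proof (induction rule: reach_in_induct)
    case base
    show ?case by (simp add: reach_in_refl)
  next
    case (step w w')
    show ?case
    proof (cases "w' = x")
      case True
      then show ?thesis using step.IH step.hyps(4) by blast
    next
      case False
      show ?thesis
      proof (cases "reach_in E (K - {x}) r w")
        case True
        then have "w \<noteq> x"
          using reach_in_endpoints[OF True] x(2) by blast
        then show ?thesis
          using reach_in_step[OF True] step.hyps(2-4) False by blast
      next
        case False
        then show ?thesis
          using step.IH by blast
      qed
    qed
  qed
  moreover have "\<not> reach_in E (K - {x}) r x"
    using reach_in_endpoints[of E "K - {x}" r x] x(2) by blast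
  ultimately show "\<exists>y. {y, x} \<in> E \<and> reach_in E (K - {x}) r y"
    using is_tree_connected[OF tree r x(1)] by blast
next
  fix y1 y2
  assume y1: "{y1, x} \<in> E \<and> reach_in E (K - {x}) r y1"
    and y2: "{y2, x} \<in> E \<and> reach_in E (K - {x}) r y2"
  show "y1 = y2"
  proof (rule ccontr)
    assume "y1 \<noteq> y2"
    moreover have "y2 \<in> K" "y2 \<noteq> x"
      using is_tree_edge[OF tree conjunct1[OF y2]] by auto
    ultimately have "{y2, x} \<in> E - {{y1, x}}"
      using y2 by (simp add: doubleton_eq_iff)
    have "reach_in E (K - {x}) y1 y2"
      using reach_in_trans[OF reach_in_sym[OF conjunct2[OF y1]] conjunct2[OF y2]] .
    then have "reach_in (E - {{y1, x}}) K y1 y2"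
      by (rule reach_in_avoid_edge) auto
    then have "reach_in (E - {{y1, x}}) K y1 x"
      by (rule reach_in_step) fact+
    then show False
      using is_tree_edge_is_bridge[OF tree] y1 by blast
  qed
qed

lemma tpred_edge_reach:
  assumes "is_tree K E" and "r \<in> K" and "x \<in> K" and "x \<noteq> r"
  shows "{tpred K E r x, x} \<in> E \<and> reach_in E (K - {x}) r (tpred K E r x)"
  unfolding tpred_def using theI'[OF tpred_ex1[OF assms]] .

lemma tpred_eqI:
  assumes "is_tree K E" and "r \<in> K" and "x \<in> K" and "x \<noteq> r"
    and "{y, x} \<in> E" and "reach_in E (K - {x}) r y"
  shows "tpred K E r x = y"
  unfolding tpred_def using the1_equality[OF tpred_ex1[OF assms(1-4)]] assms(5,6) by blast

lemma root_notin_subtree: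
  assumes tree: "is_tree K E" and "r \<in> K" and "x \<in> K" and "x \<noteq> r"
  shows "r \<notin> subtree K E r x"
proof
  let ?q = "tpred K E r x"
  assume "r \<in> subtree K E r x"
  then have "reach_in (E - {{?q, x}}) K x r"
    unfolding subtree_def by blast
  moreover have "reach_in (E - {{?q, x}}) K r ?q"
    using tpred_edge_reach[OF assms] by (auto intro: reach_in_avoid_edge)
  ultimately have "reach_in (E - {{?q, x}}) K ?q x"
    by (rule reach_in_sym[OF reach_in_trans])
  then show False
    using is_tree_edge_is_bridge[OF tree] tpred_edge_reach[OF assms] by blast
qed

lemma tree_norm_powr:
  assumes "0 < p"
  shows "tree_norm p d K r E b powr p =
    (\<Sum>x\<in>K - {r}. \<bar>(\<Sum>y\<in>subtree K E r x. b y) * d (tpred K E r x) x\<bar> powr p)"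
  unfolding tree_norm_def using assms by (simp add: powr_powr sum_nonneg)

lemma sum_Un_overlap_point:
  assumes "finite A" and "finite B" and "A \<inter> B = {c}"
  shows "sum f (A \<union> B) = sum (f(c := sum f B)) A"
proof -
  have "A \<union> B = (A - {c}) \<union> B" and "(A - {c}) \<inter> B = {}" and "c \<in> A"
    using assms(3) by auto
  then have "sum f (A \<union> B) = sum f (A - {c}) + sum f B"
    using assms(1,2) by (simp add: sum.union_disjoint)
  also have "sum f (A - {c}) = sum (f(c := sum f B)) (A - {c})"
    by (rule sum.cong) auto
  also have "\<dots> + sum f B = sum (f(c := sum f B)) A"
    using sum.remove[OF assms(1) \<open>c \<in> A\<close>, of "f(c := sum f B)"] by (simp add: add.commute)
  finally show ?thesis .
qed

lemma is_tree_Un: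
  assumes tree1: "is_tree M1 T1" and tree2: "is_tree M2 T2" and overlap: "M1 \<inter> M2 = {x0}"
  shows "is_tree (M1 \<union> M2) (T1 \<union> T2)"
proof -
  have fin: "finite M1" "finite M2" "finite T1" "finite T2"
    using tree1 tree2 is_tree_finite_edges by (auto simp: is_tree_def)
  have "T1 \<inter> T2 = {}"
  proof (rule ccontr)
    assume "T1 \<inter> T2 \<noteq> {}"
    then obtain u v where uv: "{u, v} \<in> T1" "{u, v} \<in> T2"
      using tree1 unfolding is_tree_def by blast
    then show False
      using is_tree_edge[OF tree1 uv(1)] is_tree_edge[OF tree2 uv(2)]
      by (metis IntI overlap singletonD)
  qed
  then have "card (T1 \<union> T2) = card T1 + card T2"
    using fin by (simp add: card_Un_disjoint)
  moreover have "card (M1 \<union> M2) + 1 = card M1 + card M2"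
    using card_Un_Int[OF fin(1,2)] overlap by simp
  ultimately have card: "card (T1 \<union> T2) + 1 = card (M1 \<union> M2)"
    using tree1 tree2 unfolding is_tree_def by linarith
  have x0: "x0 \<in> M1" "x0 \<in> M2"
    using overlap by auto
  have to_x0: "reach_in (T1 \<union> T2) (M1 \<union> M2) u x0" if "u \<in> M1 \<union> M2" for u
    using that is_tree_connected[OF tree1 _ x0(1)] is_tree_connected[OF tree2 _ x0(2)]
    by (auto intro: reach_in_mono)
  have "reach_in (T1 \<union> T2) (M1 \<union> M2) u v" if "u \<in> M1 \<union> M2" "v \<in> M1 \<union> M2" for u v
    using reach_in_trans[OF to_x0 reach_in_sym[OF to_x0]] that .
  with card fin tree1 tree2 show ?thesis
    unfolding is_tree_def by blast
qed

locale glued_trees =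
  fixes M1 M2 :: "'a set" and T1 T2 :: "'a set set" and x0 z :: 'a
  assumes tree1: "is_tree M1 T1" and tree2: "is_tree M2 T2"
    and overlap: "M1 \<inter> M2 = {x0}" and root: "z \<in> M2"
begin

lemma tree: "is_tree (M1 \<union> M2) (T1 \<union> T2)"
  using tree1 tree2 overlap by (rule is_tree_Un)

lemma x0_mem: "x0 \<in> M1" "x0 \<in> M2"
  using overlap by auto

lemma tpred_glued_left:
  assumes x: "x \<in> M1" "x \<noteq> x0"
  shows "tpred (M1 \<union> M2) (T1 \<union> T2) z x = tpred M1 T1 x0 x"
proof (rule tpred_eqI[OF tree])
  let ?q = "tpred M1 T1 x0 x"
  have q: "{?q, x} \<in> T1" "reach_in T1 (M1 - {x}) x0 ?q"
    using tpred_edge_reach[OF tree1 x0_mem(1) x] by auto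
  have "x \<notin> M2"
    using x overlap by blast
  have "reach_in T2 M2 z x0"
    using tree2 root x0_mem(2) by (rule is_tree_connected)
  then have "reach_in (T1 \<union> T2) (M1 \<union> M2 - {x}) z x0"
    by (rule reach_in_mono) (use \<open>x \<notin> M2\<close> in auto)
  moreover have "reach_in (T1 \<union> T2) (M1 \<union> M2 - {x}) x0 ?q"
    using q(2) by (rule reach_in_mono) auto
  ultimately show "reach_in (T1 \<union> T2) (M1 \<union> M2 - {x}) z ?q"
    by (rule reach_in_trans)
  show "{?q, x} \<in> T1 \<union> T2"
    using q(1) by blast
  show "z \<in> M1 \<union> M2" "x \<in> M1 \<union> M2" "x \<noteq> z"
    using root x \<open>x \<notin> M2\<close> by auto
qed

lemma tpred_glued_right:
  assumes x: "x \<in> M2" "x \<noteq> z"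
  shows "tpred (M1 \<union> M2) (T1 \<union> T2) z x = tpred M2 T2 z x"
proof (rule tpred_eqI[OF tree])
  let ?q = "tpred M2 T2 z x"
  have q: "{?q, x} \<in> T2" "reach_in T2 (M2 - {x}) z ?q"
    using tpred_edge_reach[OF tree2 root x] by auto
  show "reach_in (T1 \<union> T2) (M1 \<union> M2 - {x}) z ?q"
    using q(2) by (rule reach_in_mono) auto
  show "{?q, x} \<in> T1 \<union> T2"
    using q(1) by blast
  show "z \<in> M1 \<union> M2" "x \<in> M1 \<union> M2" "x \<noteq> z"
    using root x by auto
qed

lemma subtree_glued_left:
  assumes x: "x \<in> M1" "x \<noteq> x0"
  shows "subtree (M1 \<union> M2) (T1 \<union> T2) z x = subtree M1 T1 x0 x"
proof -
  let ?e = "{tpred M1 T1 x0 x, x}"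
  have glued: "subtree (M1 \<union> M2) (T1 \<union> T2) z x =
      {y \<in> M1 \<union> M2. reach_in (T1 \<union> T2 - {?e}) (M1 \<union> M2) x y}"
    unfolding subtree_def tpred_glued_left[OF x] ..
  have "y \<in> subtree M1 T1 x0 x" if "reach_in (T1 \<union> T2 - {?e}) (M1 \<union> M2) x y" for y
    using that
  proof (rule reach_in_closed)
    show "x \<in> subtree M1 T1 x0 x"
      using x by (simp add: subtree_def reach_in_refl)
  next
    fix w w'
    assume w: "w \<in> subtree M1 T1 x0 x" and "{w, w'} \<in> T1 \<union> T2 - {?e}"
    have "w \<in> M1" "w \<noteq> x0"
      using w root_notin_subtree[OF tree1 x0_mem(1) x] by (auto simp: subtree_def)
    then have "w \<notin> M2"
      using overlap by blast
    then have "{w, w'} \<in> T1 - {?e}"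
      using \<open>{w, w'} \<in> T1 \<union> T2 - {?e}\<close> is_tree_edge[OF tree2] by blast
    moreover have "w' \<in> M1"
      using calculation is_tree_edge[OF tree1] by blast
    ultimately show "w' \<in> subtree M1 T1 x0 x"
      using w \<open>w \<in> M1\<close> reach_in_step[of "T1 - {?e}" M1 x w w'] by (simp add: subtree_def)
  qed
  moreover have "reach_in (T1 \<union> T2 - {?e}) (M1 \<union> M2) x y"
    if "reach_in (T1 - {?e}) M1 x y" for y
    using that by (rule reach_in_mono) auto
  ultimately show ?thesis
    unfolding glued by (auto simp: subtree_def)
qed

lemma subtree_glued_right:
  assumes x: "x \<in> M2" "x \<noteq> z"
  shows "subtree (M1 \<union> M2) (T1 \<union> T2) z x =
    subtree M2 T2 z x \<union> (if x0 \<in> subtree M2 T2 z x then M1 else {})"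
proof -
  let ?S = "subtree M2 T2 z x" and ?e = "{tpred M2 T2 z x, x}"
  have glued: "subtree (M1 \<union> M2) (T1 \<union> T2) z x =
      {y \<in> M1 \<union> M2. reach_in (T1 \<union> T2 - {?e}) (M1 \<union> M2) x y}"
    unfolding subtree_def tpred_glued_right[OF x] ..
  have S: "?S = {y \<in> M2. reach_in (T2 - {?e}) M2 x y}"
    unfolding subtree_def ..
  have "?e \<in> T2"
    using tpred_edge_reach[OF tree2 root x] by blast
  then have "?e \<notin> T1"
    using is_tree_edge[OF tree2 \<open>?e \<in> T2\<close>] is_tree_edge[OF tree1, of "tpred M2 T2 z x" x]
    by (metis IntI overlap singletonD)
  have "y \<in> ?S \<union> (if x0 \<in> ?S then M1 else {})"
    if "reach_in (T1 \<union> T2 - {?e}) (M1 \<union> M2) x y" for y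
    using that
  proof (rule reach_in_closed)
    show "x \<in> ?S \<union> (if x0 \<in> ?S then M1 else {})"
      using x by (simp add: S reach_in_refl)
  next
    fix w w'
    assume w: "w \<in> ?S \<union> (if x0 \<in> ?S then M1 else {})" and "{w, w'} \<in> T1 \<union> T2 - {?e}"
    then consider "{w, w'} \<in> T1" | "{w, w'} \<in> T2 - {?e}"
      by blast
    then show "w' \<in> ?S \<union> (if x0 \<in> ?S then M1 else {})"
    proof cases
      case 1
      then have "w \<in> M1" "w' \<in> M1"
        using is_tree_edge[OF tree1] by blast+
      moreover have "x0 \<in> ?S"
        using w \<open>w \<in> M1\<close> overlap by (auto simp: S split: if_splits)
      ultimately show ?thesis
        by simp
    next
      case 2
      then have "w \<in> M2" "w' \<in> M2"
        using is_tree_edge[OF tree2] by blast+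
      then have "w \<in> ?S"
        using w overlap by (auto split: if_splits)
      then show ?thesis
        using 2 \<open>w' \<in> M2\<close> reach_in_step[of "T2 - {?e}" M2 x w w'] by (simp add: S)
    qed
  qed
  moreover have "?S \<subseteq> subtree (M1 \<union> M2) (T1 \<union> T2) z x"
    unfolding glued S by (auto elim: reach_in_mono)
  moreover have "M1 \<subseteq> subtree (M1 \<union> M2) (T1 \<union> T2) z x" if "x0 \<in> ?S"
  proof
    fix y assume "y \<in> M1"
    have "reach_in (T1 \<union> T2 - {?e}) (M1 \<union> M2) x x0"
      using that \<open>?S \<subseteq> _\<close> unfolding glued by blast
    moreover have "reach_in T1 M1 x0 y"
      using tree1 x0_mem(1) \<open>y \<in> M1\<close> by (rule is_tree_connected)
    then have "reach_in (T1 \<union> T2 - {?e}) (M1 \<union> M2) x0 y"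
      by (rule reach_in_mono) (use \<open>?e \<notin> T1\<close> in auto)
    ultimately have "reach_in (T1 \<union> T2 - {?e}) (M1 \<union> M2) x y"
      by (rule reach_in_trans)
    then show "y \<in> subtree (M1 \<union> M2) (T1 \<union> T2) z x"
      unfolding glued using \<open>y \<in> M1\<close> by blast
  qed
  ultimately show ?thesis
    unfolding glued by (cases "x0 \<in> ?S") auto
qed

lemma sum_subtree_glued_right:
  assumes x: "x \<in> M2" "x \<noteq> z"
  shows "(\<Sum>y\<in>subtree (M1 \<union> M2) (T1 \<union> T2) z x. a y) =
    (\<Sum>y\<in>subtree M2 T2 z x. (a(x0 := sum a M1)) y)"
proof (cases "x0 \<in> subtree M2 T2 z x")
  case True
  have "subtree M2 T2 z x \<subseteq> M2"
    by (auto simp: subtree_def)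
  then have "finite (subtree M2 T2 z x)" and "subtree M2 T2 z x \<inter> M1 = {x0}"
    using tree2 True overlap by (auto simp: is_tree_def intro: finite_subset)
  moreover have "finite M1"
    using tree1 by (simp add: is_tree_def)
  ultimately show ?thesis
    using True by (simp add: subtree_glued_right[OF x] sum_Un_overlap_point)
next
  case False
  then have "subtree (M1 \<union> M2) (T1 \<union> T2) z x = subtree M2 T2 z x"
    by (simp add: subtree_glued_right[OF x])
  then show ?thesis
    using False by (auto intro!: sum.cong)
qed

end

theorem lemma3p13:
  fixes p :: real and M M1 M2 :: "'a set" and d :: "'a \<Rightarrow> 'a \<Rightarrow> real"
    and z x0 :: 'a and T T1 T2 :: "'a set set" and a :: "'a \<Rightarrow> real"
  assumes "0 < p" and "p \<le> 1"
    and "finite M" and "z \<in> M" and "p_metric M d p"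
    and "M1 \<union> M2 = M" and "z \<in> M2" and "M1 \<inter> M2 = {x0}"
    and "x0 \<in> M" and "x0 \<noteq> z" and "card M1 \<ge> 2"
    and "T \<in> trees M" and "T1 \<in> trees M1" and "T2 \<in> trees M2"
    and "T = T1 \<union> T2"
  shows "tree_norm p d M z T a powr p =
           tree_norm p d M1 x0 T1 a powr p
         + tree_norm p d M2 z T2 (a(x0 := (\<Sum>w\<in>M1. a w))) powr p"
proof -
  interpret glued_trees M1 M2 T1 T2 x0 z
    using assms by unfold_locales (auto simp: trees_def)
  have M: "M = M1 \<union> M2" and T: "T = T1 \<union> T2"
    using assms by simp_all
  define summand where "summand K r E b x =
      \<bar>(\<Sum>y\<in>subtree K E r x. b y) * d (tpred K E r x) x\<bar> powr p"
    for K r E and b :: "'a \<Rightarrow> real" and x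
  have norm: "tree_norm p d K r E b powr p = (\<Sum>x\<in>K - {r}. summand K r E b x)" for K r E b
    unfolding summand_def using \<open>0 < p\<close> by (rule tree_norm_powr)
  have "M - {z} = (M1 - {x0}) \<union> (M2 - {z})" and "(M1 - {x0}) \<inter> (M2 - {z}) = {}"
    and "finite (M1 - {x0})" and "finite (M2 - {z})"
    using assms(3,7,8,10) M by auto
  then have "(\<Sum>x\<in>M - {z}. summand M z T a x) =
      (\<Sum>x\<in>M1 - {x0}. summand M z T a x) + (\<Sum>x\<in>M2 - {z}. summand M z T a x)"
    by (simp add: sum.union_disjoint)
  also have "(\<Sum>x\<in>M1 - {x0}. summand M z T a x) = (\<Sum>x\<in>M1 - {x0}. summand M1 x0 T1 a x)"
    by (intro sum.cong) (auto simp: summand_def M T tpred_glued_left subtree_glued_left)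
  also have "(\<Sum>x\<in>M2 - {z}. summand M z T a x) =
      (\<Sum>x\<in>M2 - {z}. summand M2 z T2 (a(x0 := sum a M1)) x)"
    by (intro sum.cong) (auto simp: summand_def M T tpred_glued_right sum_subtree_glued_right)
  finally show ?thesis
    by (simp add: norm)
qed

end
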